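(* Let $G=G_1\otimes G_2$, where $G_1$ and $G_2$ are arbitrary vertex-disjoint graphs, and let $I_s,I_t$ be independent sets of $G$. Then the length of a shortest reconfiguration sequence from $I_s$ to $I_t$ is at most $2$.
   Context: All graphs are finite, simple, undirected, with nonempty vertex sets. The join of vertex-disjoint graphs $G_1=(V_1,E_1)$, $G_2=(V_2,E_2)$ is $G_1\otimes G_2=(V_1\cup V_2,\,E_1\cup E_2\cup\{v_1v_2: v_1\in V_1,v_2\in V_2\})$. A reconfiguration sequence from $I_s$ to $I_t$ of length $\ell$ is a sequence $\langle I_s=I_0,\dots,I_\ell=I_t\rangle$ of independent sets of $G$ such that the induced subgraph $G[I_{i-1}\triangle I_i]$ is connected for every $i\in\{1,\dots,\ell\}$. *)

theory Defs
  imports Main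
begin

definition is_graph :: "'a set \<Rightarrow> 'a set set \<Rightarrow> bool" where
  "is_graph V E \<longleftrightarrow> finite V \<and> V \<noteq> {} \<and>
     (\<forall>e\<in>E. \<exists>u v. e = {u, v} \<and> u \<noteq> v \<and> u \<in> V \<and> v \<in> V)"

definition join_V :: "'a set \<Rightarrow> 'a set \<Rightarrow> 'a set" where
  "join_V V1 V2 = V1 \<union> V2"

definition join_E :: "'a set \<Rightarrow> 'a set set \<Rightarrow> 'a set \<Rightarrow> 'a set set \<Rightarrow> 'a set set" where
  "join_E V1 E1 V2 E2 = E1 \<union> E2 \<union> {{v1, v2} | v1 v2. v1 \<in> V1 \<and> v2 \<in> V2}"

definition independent :: "'a set \<Rightarrow> 'a set set \<Rightarrow> 'a set \<Rightarrow> bool" where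
  "independent V E I \<longleftrightarrow> I \<subseteq> V \<and> (\<forall>u\<in>I. \<forall>v\<in>I. {u, v} \<notin> E)"

definition induced_connected :: "'a set set \<Rightarrow> 'a set \<Rightarrow> bool" where
  "induced_connected E S \<longleftrightarrow> S \<noteq> {} \<and>
     (\<forall>u\<in>S. \<forall>v\<in>S. (\<lambda>x y. x \<in> S \<and> y \<in> S \<and> {x, y} \<in> E)\<^sup>*\<^sup>* u v)"

definition symdiff :: "'a set \<Rightarrow> 'a set \<Rightarrow> 'a set" where
  "symdiff A B = (A - B) \<union> (B - A)"

definition reconf_seq :: "'a set \<Rightarrow> 'a set set \<Rightarrow> 'a set list \<Rightarrow> 'a set \<Rightarrow> 'a set \<Rightarrow> bool" where
  "reconf_seq V E Is Ss St \<longleftrightarrow> Is \<noteq> [] \<and> hd Is = Ss \<and> last Is = St \<and>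
     (\<forall>I\<in>set Is. independent V E I) \<and>
     (\<forall>i. Suc i < length Is \<longrightarrow> induced_connected E (symdiff (Is ! i) (Is ! Suc i)))"

definition seq_length :: "'a set list \<Rightarrow> nat" where
  "seq_length Is = length Is - 1"

end

theory Submission
  imports Defs
begin

text \<open>An independent set of \<open>G\<^sub>1 \<otimes> G\<^sub>2\<close> lies entirely in one side, because every vertex of
  \<open>V\<^sub>1\<close> is adjacent to every vertex of \<open>V\<^sub>2\<close>. For the same reason the union of two nonempty
  sets on opposite sides induces a connected subgraph. Hence if \<open>I\<^sub>s\<close> and \<open>I\<^sub>t\<close> are nonempty and
  on opposite sides, one step \<open>I\<^sub>s \<rightarrow> I\<^sub>t\<close> suffices; otherwise both lie in the same side \<open>V\<^sub>i\<close>,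
  and the two steps \<open>I\<^sub>s \<rightarrow> {w} \<rightarrow> I\<^sub>t\<close> through a vertex \<open>w\<close> of the other side work, since
  \<open>I \<union> {w}\<close> induces a star centred at \<open>w\<close>.\<close>

abbreviation induced_adj :: "'a set set \<Rightarrow> 'a set \<Rightarrow> 'a \<Rightarrow> 'a \<Rightarrow> bool" where
  "induced_adj E S \<equiv> \<lambda>x y. x \<in> S \<and> y \<in> S \<and> {x, y} \<in> E"

lemma symp_induced_adj: "symp (induced_adj E S)"
  by (auto intro: sympI simp: insert_commute)

lemma induced_connectedI:
  assumes "c \<in> S" and "\<And>x. x \<in> S \<Longrightarrow> (induced_adj E S)\<^sup>*\<^sup>* x c"
  shows "induced_connected E S"
  unfolding induced_connected_def
proof (intro conjI ballI)
  show "S \<noteq> {}" using \<open>c \<in> S\<close> by blast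
next
  fix u v assume "u \<in> S" "v \<in> S"
  have "(induced_adj E S)\<^sup>*\<^sup>* c v"
    by (rule sympD[OF symp_rtranclp[OF symp_induced_adj] assms(2)[OF \<open>v \<in> S\<close>]])
  then show "(induced_adj E S)\<^sup>*\<^sup>* u v"
    using assms(2)[OF \<open>u \<in> S\<close>] by (rule rtranclp_trans[rotated])
qed

lemma induced_connected_singleton: "induced_connected E {w}"
  by (rule induced_connectedI) auto

lemma symdiff_commute: "symdiff A B = symdiff B A"
  unfolding symdiff_def by blast

lemma symdiff_disjoint: "A \<inter> B = {} \<Longrightarrow> symdiff A B = A \<union> B"
  unfolding symdiff_def by blast

lemma join_V_commute: "join_V V1 V2 = join_V V2 V1"
  unfolding join_V_def by blast

lemma join_E_commute: "join_E V1 E1 V2 E2 = join_E V2 E2 V1 E1"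
  unfolding join_E_def by (blast intro: insert_commute)

lemma join_E_cross:
  assumes "x \<in> V1" "y \<in> V2"
  shows "{x, y} \<in> join_E V1 E1 V2 E2"
  using assms unfolding join_E_def by blast

lemma singleton_notin_join_E:
  assumes "is_graph V1 E1" "is_graph V2 E2" "V1 \<inter> V2 = {}"
  shows "{w} \<notin> join_E V1 E1 V2 E2"
  using assms unfolding is_graph_def join_E_def by (auto simp: doubleton_eq_iff)

lemma independent_singleton:
  assumes "w \<in> V" "{w} \<notin> E"
  shows "independent V E {w}"
  using assms unfolding independent_def by simp

lemma independent_join_subset:
  assumes "independent (join_V V1 V2) (join_E V1 E1 V2 E2) I"
  shows "I \<subseteq> V1 \<or> I \<subseteq> V2"
proof (rule ccontr)
  assume "\<not> (I \<subseteq> V1 \<or> I \<subseteq> V2)"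
  moreover have "I \<subseteq> V1 \<union> V2"
    using assms unfolding independent_def join_V_def by blast
  ultimately obtain u v where "u \<in> I" "u \<in> V1" "v \<in> I" "v \<in> V2" by blast
  then show False
    using assms join_E_cross[of u V1 v V2 E1 E2] unfolding independent_def by blast
qed

lemma induced_connected_join:
  assumes "A \<subseteq> V1" "B \<subseteq> V2" "A \<noteq> {}" "B \<noteq> {}"
  shows "induced_connected (join_E V1 E1 V2 E2) (A \<union> B)"
proof -
  let ?R = "induced_adj (join_E V1 E1 V2 E2) (A \<union> B)"
  obtain a b where "a \<in> A" "b \<in> B" using assms by blast
  have cross: "?R x y" "?R y x" if "x \<in> A" "y \<in> B" for x y
    using that assms join_E_cross[of x V1 y V2 E1 E2] by (auto simp: insert_commute)
  have "?R\<^sup>*\<^sup>* x b" if "x \<in> A \<union> B" for x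
  proof (cases "x \<in> A")
    case True
    then show ?thesis using \<open>b \<in> B\<close> cross by blast
  next
    case False
    with that have "?R x a" "?R a b" using \<open>a \<in> A\<close> \<open>b \<in> B\<close> cross by auto
    then show ?thesis by (rule converse_rtranclp_into_rtranclp[OF _ r_into_rtranclp])
  qed
  then show ?thesis using \<open>b \<in> B\<close> by (intro induced_connectedI) auto
qed

lemma induced_connected_join_insert:
  assumes "A \<subseteq> V1" "w \<in> V2"
  shows "induced_connected (join_E V1 E1 V2 E2) (insert w A)"
proof (cases "A = {}")
  case True
  then show ?thesis by (simp add: induced_connected_singleton)
next
  case False
  then show ?thesis using induced_connected_join[OF assms(1), of "{w}"] assms(2) by simp
qed

lemma reconf_seq_singleton: "independent V E I \<Longrightarrow> reconf_seq V E [I] I I"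
  unfolding reconf_seq_def by simp

lemma reconf_seq_Cons:
  assumes "independent V E I" "reconf_seq V E Is J St" "induced_connected E (symdiff I J)"
  shows "reconf_seq V E (I # Is) I St"
  unfolding reconf_seq_def
proof (intro conjI allI impI)
  fix i assume "Suc i < length (I # Is)"
  then show "induced_connected E (symdiff ((I # Is) ! i) ((I # Is) ! Suc i))"
    using assms by (cases i) (auto simp: reconf_seq_def hd_conv_nth)
qed (use assms in \<open>auto simp: reconf_seq_def\<close>)

lemma reconf_join_across:
  assumes "Ss \<subseteq> V1" "St \<subseteq> V2" "Ss \<noteq> {}" "St \<noteq> {}" "V1 \<inter> V2 = {}"
    and "independent (join_V V1 V2) (join_E V1 E1 V2 E2) Ss"
    and "independent (join_V V1 V2) (join_E V1 E1 V2 E2) St"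
  shows "reconf_seq (join_V V1 V2) (join_E V1 E1 V2 E2) [Ss, St] Ss St"
proof (rule reconf_seq_Cons[OF assms(6) reconf_seq_singleton[OF assms(7)]])
  have "symdiff Ss St = Ss \<union> St" using assms(1,2,5) by (intro symdiff_disjoint) blast
  then show "induced_connected (join_E V1 E1 V2 E2) (symdiff Ss St)"
    using induced_connected_join[OF assms(1-4)] by simp
qed

lemma reconf_join_same_side:
  assumes "is_graph V1 E1" "is_graph V2 E2" "V1 \<inter> V2 = {}" "Ss \<subseteq> V1" "St \<subseteq> V1"
    and "independent (join_V V1 V2) (join_E V1 E1 V2 E2) Ss"
    and "independent (join_V V1 V2) (join_E V1 E1 V2 E2) St"
  shows "\<exists>w. reconf_seq (join_V V1 V2) (join_E V1 E1 V2 E2) [Ss, {w}, St] Ss St"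
proof -
  let ?V = "join_V V1 V2" and ?E = "join_E V1 E1 V2 E2"
  obtain w where "w \<in> V2" using assms(2) unfolding is_graph_def by blast
  have independent_w: "independent ?V ?E {w}"
    using \<open>w \<in> V2\<close> singleton_notin_join_E[OF assms(1-3)]
    by (intro independent_singleton) (auto simp: join_V_def)
  have connected: "induced_connected ?E (symdiff I {w})" "induced_connected ?E (symdiff {w} I)"
    if "I \<subseteq> V1" for I
  proof -
    have "symdiff I {w} = insert w I"
      using that assms(3) \<open>w \<in> V2\<close> unfolding symdiff_def by blast
    then show "induced_connected ?E (symdiff I {w})" "induced_connected ?E (symdiff {w} I)"
      using induced_connected_join_insert[OF that \<open>w \<in> V2\<close>] by (simp_all add: symdiff_commute)
  qed
  have "reconf_seq ?V ?E [{w}, St] {w} St"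
    by (rule reconf_seq_Cons[OF independent_w reconf_seq_singleton[OF assms(7)] connected(2)[OF assms(5)]])
  then have "reconf_seq ?V ?E [Ss, {w}, St] Ss St"
    by (rule reconf_seq_Cons[OF assms(6) _ connected(1)[OF assms(4)]])
  then show ?thesis ..
qed

theorem lemma25:
  fixes V1 V2 :: "'a set" and E1 E2 :: "'a set set" and Ss St :: "'a set"
  assumes "is_graph V1 E1" and "is_graph V2 E2" and "V1 \<inter> V2 = {}"
    and "independent (join_V V1 V2) (join_E V1 E1 V2 E2) Ss"
    and "independent (join_V V1 V2) (join_E V1 E1 V2 E2) St"
  shows "\<exists>Is. reconf_seq (join_V V1 V2) (join_E V1 E1 V2 E2) Is Ss St \<and> seq_length Is \<le> 2"
proof -
  let ?V = "join_V V1 V2" and ?E = "join_E V1 E1 V2 E2"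
  have swapped: "V2 \<inter> V1 = {}"
    "independent (join_V V2 V1) (join_E V2 E2 V1 E1) Ss"
    "independent (join_V V2 V1) (join_E V2 E2 V1 E1) St"
    using assms(3-5) by (simp_all add: Int_commute join_V_commute[of V2] join_E_commute[of V2])
  consider "Ss \<subseteq> V1" "St \<subseteq> V1" | "Ss \<subseteq> V2" "St \<subseteq> V2"
    | "Ss \<subseteq> V1" "St \<subseteq> V2" "Ss \<noteq> {}" "St \<noteq> {}"
    | "Ss \<subseteq> V2" "St \<subseteq> V1" "Ss \<noteq> {}" "St \<noteq> {}"
    using independent_join_subset[OF assms(4)] independent_join_subset[OF assms(5)] by blast
  then obtain Is where "reconf_seq ?V ?E Is Ss St" "length Is \<le> 3"
  proof cases
    case 1
    then show ?thesis using reconf_join_same_side[OF assms(1-3) 1 assms(4,5)] that by fastforce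
  next
    case 2
    show ?thesis
      using reconf_join_same_side[OF assms(2,1) swapped(1) 2 swapped(2,3)] that
      unfolding join_V_commute[of V2] join_E_commute[of V2] by fastforce
  next
    case 3
    show ?thesis using reconf_join_across[OF 3 assms(3-5)] that by fastforce
  next
    case 4
    show ?thesis
      using reconf_join_across[OF 4 swapped] that
      unfolding join_V_commute[of V2] join_E_commute[of V2] by fastforce
  qed
  then show ?thesis unfolding seq_length_def by auto
qed

end
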